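(* Let $\mathcal{P}$ be a finite poset such that $\mathcal{C}(\mathcal{P})$ is simplicial. Then the matrix of $\mathbf{M}_{\mathcal{P}}^{-1}$ (in the standard basis $\{\mathbf{e}_x\}_{x\in\mathcal{P}}$) has entries $[\mathbf{M}_{\mathcal{P}}^{-1}]_{xy}=1$ if $x=y$, $[\mathbf{M}_{\mathcal{P}}^{-1}]_{xy}=-1$ if $y\lessdot x$, and $[\mathbf{M}_{\mathcal{P}}^{-1}]_{xy}=0$ otherwise. In particular, when $\mathcal{P}=[p]=\{1,\dots,p\}$ is a chain with the standard order, $\mathbf{M}_{\mathcal{P}}^{-1}$ is the $p\times p$ lower bidiagonal Toeplitz matrix with $1$ on the diagonal, $-1$ on the first subdiagonal (entries $(i+1,i)$), and $0$ elsewhere.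
   Context: The order cone $\mathcal{C}(\mathcal{P})\subset\mathbb{R}^{\mathcal{P}}$ is the set of functions $\mathbf{f}$ on $\mathcal{P}$ with $f_x\ge0$ for all $x$ and $f_x\le f_y$ whenever $x\preceq y$. A cone in $\mathbb{R}^p$ is simplicial if it is the conical hull of $p$ linearly independent vectors. $y\lessdot x$ means $x$ covers $y$: $y\prec x$ and there is no $z$ with $y\prec z\prec x$. The Möbius transform $\mathbf{M}_{\mathcal{P}}$ is the linear map on $\mathbb{R}^{\mathcal{P}}$ with $\mathbf{M}_{\mathcal{P}}(\mathbf{e}_x)=\sum_{y:\,x\preceq y}\mathbf{e}_y$. *)

theory Defs
  imports "HOL-Analysis.Analysis"
begin

text \<open>A finite poset is modelled as a finite type with an order; functions on P are
  vectors in real^'a, indexed by the elements of P.\<close>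

definition order_cone :: "(real^'a::{finite,order}) set" where
  "order_cone = {f. (\<forall>x. 0 \<le> f $ x) \<and> (\<forall>x y. x \<le> y \<longrightarrow> f $ x \<le> f $ y)}"

definition conical_hull :: "'v::real_vector set \<Rightarrow> 'v set" where
  "conical_hull B = {\<Sum>v\<in>B. c v *\<^sub>R v | c. \<forall>v\<in>B. 0 \<le> c v}"

definition simplicial :: "(real^'a::finite) set \<Rightarrow> bool" where
  "simplicial C \<longleftrightarrow> (\<exists>B. finite B \<and> card B = CARD('a) \<and> independent B \<and> C = conical_hull B)"

definition covered_by :: "'a::order \<Rightarrow> 'a \<Rightarrow> bool" where
  "covered_by y x \<longleftrightarrow> y < x \<and> \<not> (\<exists>z. y < z \<and> z < x)"

definition mobius_transform :: "real^('a::{finite,order}) \<Rightarrow> real^('a::{finite,order})" where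
  "mobius_transform f = (\<Sum>x\<in>UNIV. f $ x *\<^sub>R (\<Sum>y\<in>{y. x \<le> y}. axis y 1))"

end

theory Submission
  imports Defs
begin

text \<open>The matrix of the Moebius transform is the zeta matrix, with entry 1 at (i, j) iff j \<le> i.
  If every element has at most one lower cover, then z < x holds exactly when z lies below the
  lower cover of x, so the identity minus the cover matrix is a left inverse of the zeta matrix.

  Simpliciality of the order cone forces lower covers to be unique. The indicator vector of an
  up-set that is connected under comparability spans an extreme ray of the order cone, and every
  extreme ray of the conical hull of p = |P| vectors passes through one of them. If x had two
  lower covers y1 and y2, the p principal up-sets together with the up-set generated by y1 and y2
  (connected through x) would give p + 1 pairwise non-proportional extreme rays.\<close>

lemma exists_lower_cover_above:
  fixes z x :: "'a::{finite,order}"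
  assumes "z < x"
  shows "\<exists>y. z \<le> y \<and> covered_by y x"
proof -
  obtain y where y: "y < x" "z \<le> y" and max: "\<forall>w. w < x \<longrightarrow> y \<le> w \<longrightarrow> y = w"
    using finite_has_maximal2[of "{w. w < x}" z] assms by auto
  have "covered_by y x"
    unfolding covered_by_def using y max by (metis order.strict_iff_not)
  with y show ?thesis by blast
qed

lemma covered_by_le_imp_eq:
  assumes "covered_by y1 x" "covered_by y2 x" "y1 \<le> y2"
  shows "y1 = y2"
  using assms unfolding covered_by_def by (auto simp: order.order_iff_strict)

lemma covered_by_unique_linorder:
  fixes x y1 y2 :: "'a::linorder"
  assumes "covered_by y1 x" "covered_by y2 x"
  shows "y1 = y2"
  using assms covered_by_le_imp_eq le_cases by metis

lemma less_iff_le_lower_cover: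
  fixes x y z :: "'a::{finite,order}"
  assumes unique: "\<And>y1 y2. covered_by y1 x \<Longrightarrow> covered_by y2 x \<Longrightarrow> y1 = y2"
    and cover: "covered_by y x"
  shows "z < x \<longleftrightarrow> z \<le> y"
proof
  assume "z < x"
  then obtain w where "z \<le> w" "covered_by w x"
    using exists_lower_cover_above by blast
  with unique cover show "z \<le> y" by blast
next
  assume "z \<le> y"
  with cover show "z < x"
    unfolding covered_by_def by (blast intro: le_less_trans)
qed

lemma matrix_inv_eqI:
  fixes A B :: "'a::field^'n^'n"
  assumes "B ** A = mat 1"
  shows "matrix_inv A = B"
proof -
  have AB: "A ** B = mat 1"
    using assms matrix_left_right_inverse by blast
  have unique: "B' = B" if "A ** B' = mat 1 \<and> B' ** A = mat 1" for B'
  proof -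
    have "B' = B' ** (A ** B)" using AB by simp
    also have "\<dots> = (B' ** A) ** B" by (simp add: matrix_mul_assoc)
    also have "\<dots> = B" using that by simp
    finally show ?thesis .
  qed
  then show ?thesis
    unfolding matrix_inv_def using AB assms by (intro some_equality) (blast intro: unique)+
qed

lemma matrix_mobius_transform:
  "matrix (mobius_transform :: real^('a::{finite,order}) \<Rightarrow> _) $ i $ j = (if j \<le> i then 1 else 0)"
proof -
  have "mobius_transform (axis j 1) = (\<Sum>y\<in>{y. j \<le> y}. axis y 1)"
    unfolding mobius_transform_def by (simp add: axis_def if_distrib[of "\<lambda>c. c *\<^sub>R _"] cong: if_cong)
  then show ?thesis
    by (simp add: matrix_def axis_def)
qed

lemma matrix_inv_mobius_transform:
  assumes unique: "\<And>x y1 y2::'a::{finite,order}. covered_by y1 x \<Longrightarrow> covered_by y2 x \<Longrightarrow> y1 = y2"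
  shows "matrix_inv (matrix mobius_transform :: real^('a::{finite,order})^('a::{finite,order})) =
    (\<chi> x y. if x = y then 1 else if covered_by y x then -1 else 0)"
    (is "matrix_inv ?M = ?N")
proof (rule matrix_inv_eqI, intro iffD2[OF vec_eq_iff] allI)
  fix x z :: 'a
  have "(?N ** ?M) $ x $ z = (\<Sum>y\<in>UNIV. (if x = y then ?M $ y $ z else 0))
      - (\<Sum>y\<in>UNIV. (if covered_by y x then ?M $ y $ z else 0))"
    unfolding matrix_matrix_mult_def vec_lambda_beta sum_subtractf[symmetric]
    by (rule sum.cong) (auto simp: covered_by_def)
  also have "\<dots> = (if z \<le> x then 1 else 0) - (\<Sum>y | covered_by y x. if z \<le> y then 1 else 0)"
    by (simp add: sum.If_cases matrix_mobius_transform)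
  also have "\<dots> = mat 1 $ x $ z"
  proof (cases "\<exists>y. covered_by y x")
    case False
    then have "\<not> z < x" using exists_lower_cover_above by blast
    with False show ?thesis by (auto simp: mat_def)
  next
    case True
    then obtain y where y: "covered_by y x" by blast
    with unique have "{y. covered_by y x} = {y}" by blast
    with less_iff_le_lower_cover[OF unique y, where z = z] show ?thesis
      by (auto simp: mat_def less_le)
  qed
  finally show "(?N ** ?M) $ x $ z = mat 1 $ x $ z" .
qed

definition extreme_ray :: "'v::real_vector set \<Rightarrow> 'v \<Rightarrow> bool" where
  "extreme_ray C v \<longleftrightarrow> v \<in> C \<and> v \<noteq> 0 \<and> (\<forall>a\<in>C. \<forall>b\<in>C. a + b = v \<longrightarrow> (\<exists>t. a = t *\<^sub>R v))"

lemma extreme_ray_conical_hull: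
  assumes "finite B" and ray: "extreme_ray (conical_hull B) v"
  shows "\<exists>b\<in>B. \<exists>s. s \<noteq> 0 \<and> b = s *\<^sub>R v"
proof -
  obtain c where v: "v = (\<Sum>b\<in>B. c b *\<^sub>R b)" and c: "\<forall>b\<in>B. 0 \<le> c b"
    using ray unfolding extreme_ray_def conical_hull_def by blast
  have "\<exists>b\<in>B. c b *\<^sub>R b \<noteq> 0"
  proof (rule ccontr)
    assume "\<not> (\<exists>b\<in>B. c b *\<^sub>R b \<noteq> 0)"
    then have "v = 0" unfolding v by (intro sum.neutral) blast
    with ray show False unfolding extreme_ray_def by blast
  qed
  then obtain b0 where b0: "b0 \<in> B" "c b0 *\<^sub>R b0 \<noteq> 0" ..
  define r where "r = (\<Sum>b\<in>B. (c(b0 := 0)) b *\<^sub>R b)"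
  have "c b0 *\<^sub>R b0 \<in> conical_hull B"
    unfolding conical_hull_def using assms(1) b0 c
    by (intro CollectI exI[of _ "\<lambda>b. if b = b0 then c b0 else 0"])
      (simp add: if_distrib[of "\<lambda>t. t *\<^sub>R _"] cong: if_cong)
  moreover have "r \<in> conical_hull B"
    unfolding conical_hull_def r_def using c by auto
  moreover have "c b0 *\<^sub>R b0 + r = v"
  proof -
    have "r = (c(b0 := 0)) b0 *\<^sub>R b0 + (\<Sum>b\<in>B - {b0}. (c(b0 := 0)) b *\<^sub>R b)"
      unfolding r_def using assms(1) b0(1) by (rule sum.remove)
    also have "\<dots> = (\<Sum>b\<in>B - {b0}. c b *\<^sub>R b)"
      by (auto intro!: sum.cong)
    finally show ?thesis
      unfolding v using assms(1) b0(1) by (simp add: sum.remove)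
  qed
  ultimately obtain t where t: "c b0 *\<^sub>R b0 = t *\<^sub>R v"
    using ray unfolding extreme_ray_def by blast
  with b0(2) have "c b0 \<noteq> 0" "t \<noteq> 0" by auto
  have "b0 = inverse (c b0) *\<^sub>R (c b0 *\<^sub>R b0)"
    using \<open>c b0 \<noteq> 0\<close> by simp
  also have "\<dots> = (t / c b0) *\<^sub>R v"
    by (simp add: t divide_inverse_commute)
  finally have "b0 = (t / c b0) *\<^sub>R v" .
  with b0(1) \<open>c b0 \<noteq> 0\<close> \<open>t \<noteq> 0\<close> show ?thesis
    by (intro bexI[of _ b0] exI[of _ "t / c b0"]) auto
qed

lemma card_le_of_extreme_rays_conical_hull:
  assumes "finite B"
    and rays: "\<And>v. v \<in> S \<Longrightarrow> extreme_ray (conical_hull B) v"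
    and non_proportional: "\<And>v w s. v \<in> S \<Longrightarrow> w \<in> S \<Longrightarrow> v = s *\<^sub>R w \<Longrightarrow> v = w"
  shows "card S \<le> card B"
proof -
  have "\<forall>v\<in>S. \<exists>b\<in>B. \<exists>s. s \<noteq> 0 \<and> b = s *\<^sub>R v"
    using extreme_ray_conical_hull[OF \<open>finite B\<close> rays] by blast
  then obtain g where g: "\<And>v. v \<in> S \<Longrightarrow> g v \<in> B \<and> (\<exists>s. s \<noteq> 0 \<and> g v = s *\<^sub>R v)"
    by (metis bchoice)
  have "inj_on g S"
  proof (rule inj_onI)
    fix v w assume "v \<in> S" "w \<in> S" "g v = g w"
    moreover obtain s s' where "s \<noteq> 0" "g v = s *\<^sub>R v" "g w = s' *\<^sub>R w"
      using g[OF \<open>v \<in> S\<close>] g[OF \<open>w \<in> S\<close>] by blast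
    ultimately have "s *\<^sub>R v = s' *\<^sub>R w" by simp
    then have "inverse s *\<^sub>R (s *\<^sub>R v) = (s' / s) *\<^sub>R w"
      by (simp add: divide_inverse_commute)
    with \<open>s \<noteq> 0\<close> have "v = (s' / s) *\<^sub>R w"
      by simp
    with \<open>v \<in> S\<close> \<open>w \<in> S\<close> show "v = w" by (rule non_proportional)
  qed
  with g show ?thesis
    by (intro card_inj_on_le[OF _ _ \<open>finite B\<close>]) auto
qed

definition indicator_vector :: "'a::finite set \<Rightarrow> real^'a" where
  "indicator_vector U = (\<chi> w. indicator U w)"

lemma inj_indicator_vector: "inj indicator_vector"
  by (rule injI) (simp add: indicator_vector_def vec_eq_iff indicator_def set_eq_iff of_bool_eq_iff)

lemma indicator_vector_eq_scaleR_imp_eq: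
  assumes "indicator_vector U = s *\<^sub>R indicator_vector V" and "U \<noteq> {}"
  shows "U = V"
proof -
  obtain u where "u \<in> U" using assms(2) by blast
  with assms(1) have "s * indicator V u = 1"
    unfolding indicator_vector_def vec_eq_iff by (drule_tac spec[of _ u]) simp
  then have "s = 1" by (cases "u \<in> V") auto
  with assms(1) show ?thesis
    using injD[OF inj_indicator_vector] by simp
qed

lemma indicator_vector_in_order_cone:
  fixes U :: "'a::{finite,order} set"
  assumes "\<And>u w. u \<in> U \<Longrightarrow> u \<le> w \<Longrightarrow> w \<in> U"
  shows "indicator_vector U \<in> order_cone"
  using assms unfolding order_cone_def indicator_vector_def by (auto simp: indicator_def)

lemma extreme_ray_order_cone_indicator_vector:
  fixes U :: "'a::{finite,order} set"
  assumes up: "\<And>u w. u \<in> U \<Longrightarrow> u \<le> w \<Longrightarrow> w \<in> U" and "r \<in> U"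
    and connected: "\<And>w. w \<in> U \<Longrightarrow> (\<lambda>u v. u \<in> U \<and> v \<in> U \<and> (u \<le> v \<or> v \<le> u))\<^sup>*\<^sup>* r w"
  shows "extreme_ray order_cone (indicator_vector U)"
proof -
  have "indicator_vector U \<in> order_cone"
    using up by (rule indicator_vector_in_order_cone)
  moreover have "indicator_vector U \<noteq> 0"
    using \<open>r \<in> U\<close> by (auto simp: indicator_vector_def vec_eq_iff intro!: exI[of _ r])
  moreover have "\<exists>t. a = t *\<^sub>R indicator_vector U"
    if a: "a \<in> order_cone" and b: "b \<in> order_cone" and ab: "a + b = indicator_vector U" for a b
  proof -
    have sum: "a $ w + b $ w = indicator U w" for w
      using ab by (auto simp: indicator_vector_def vec_eq_iff)
    have nonneg: "0 \<le> a $ w" "0 \<le> b $ w" for w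
      using a b unfolding order_cone_def by auto
    have mono: "a $ u \<le> a $ v" "b $ u \<le> b $ v" if "u \<le> v" for u v
      using a b that unfolding order_cone_def by auto
    have outside: "a $ w = 0" if "w \<notin> U" for w
      using nonneg[of w] sum[of w] that by simp
    have comparable: "a $ u = a $ v" if "u \<in> U" "v \<in> U" "u \<le> v" for u v
      using mono[OF \<open>u \<le> v\<close>] sum[of u] sum[of v] that by simp
    have "a $ w = a $ r" if "w \<in> U" for w
      using connected[OF that]
    proof (induction rule: rtranclp_induct)
      case (step u v)
      then show ?case using comparable by metis
    qed simp
    with outside have "a = a $ r *\<^sub>R indicator_vector U"
      by (auto simp: indicator_vector_def vec_eq_iff indicator_def)
    then show ?thesis by blast
  qed
  ultimately show ?thesis
    unfolding extreme_ray_def by blast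
qed

lemma extreme_ray_order_cone_principal_upset:
  "extreme_ray order_cone (indicator_vector {w::'a::{finite,order}. z \<le> w})"
proof (rule extreme_ray_order_cone_indicator_vector)
  show "u \<in> {w. z \<le> w} \<Longrightarrow> u \<le> w \<Longrightarrow> w \<in> {w. z \<le> w}" for u w
    by (simp add: order.trans)
qed (auto intro: r_into_rtranclp)

lemma extreme_ray_order_cone_union_principal_upsets:
  fixes x y1 y2 :: "'a::{finite,order}"
  assumes "y1 \<le> x" "y2 \<le> x"
  shows "extreme_ray order_cone (indicator_vector ({w. y1 \<le> w} \<union> {w. y2 \<le> w}))"
    (is "extreme_ray _ (indicator_vector ?U)")
proof (rule extreme_ray_order_cone_indicator_vector)
  show "u \<in> ?U \<Longrightarrow> u \<le> w \<Longrightarrow> w \<in> ?U" for u w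
    by (auto intro: order.trans)
  show "y1 \<in> ?U" by simp
  let ?R = "\<lambda>u v. u \<in> ?U \<and> v \<in> ?U \<and> (u \<le> v \<or> v \<le> u)"
  have "?R y1 x" "?R x y2"
    using assms by auto
  then have y1_y2: "?R\<^sup>*\<^sup>* y1 y2"
    by (rule converse_rtranclp_into_rtranclp[OF _ r_into_rtranclp])
  show "?R\<^sup>*\<^sup>* y1 w" if "w \<in> ?U" for w
  proof (cases "y1 \<le> w")
    case True
    then show ?thesis by (intro r_into_rtranclp) simp
  next
    case False
    with that have "?R y2 w" by auto
    with y1_y2 show ?thesis by (rule rtranclp.rtrancl_into_rtrancl)
  qed
qed

lemma lower_cover_unique_if_simplicial_order_cone:
  fixes x y1 y2 :: "'a::{finite,order}"
  assumes "simplicial (order_cone :: (real^('a::{finite,order})) set)"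
    and y1: "covered_by y1 x" and y2: "covered_by y2 x"
  shows "y1 = y2"
proof (rule ccontr)
  assume "y1 \<noteq> y2"
  obtain B :: "(real^('a::{finite,order})) set"
    where B: "finite B" "card B = CARD('a)" "order_cone = conical_hull B"
    using assms(1) unfolding simplicial_def by blast
  define up :: "'a \<Rightarrow> 'a set" where "up z = {w. z \<le> w}" for z
  define U where "U = up y1 \<union> up y2"
  have "inj up"
  proof (rule injI)
    fix z z' assume eq: "up z = up z'"
    have "z \<in> up z'" unfolding eq[symmetric] by (simp add: up_def)
    moreover have "z' \<in> up z" unfolding eq by (simp add: up_def)
    ultimately show "z = z'" by (simp add: up_def order.antisym)
  qed
  have "U \<notin> range up"
  proof
    assume "U \<in> range up"
    then obtain z where z: "U = up z" by blast
    have "y1 \<in> up z" "y2 \<in> up z"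
      unfolding z[symmetric] by (simp_all add: U_def up_def)
    moreover have "z \<in> U"
      unfolding z by (simp add: up_def)
    ultimately have "z \<le> y1" "z \<le> y2" "y1 \<le> z \<or> y2 \<le> z"
      by (simp_all add: U_def up_def)
    then have "y1 \<le> y2 \<or> y2 \<le> y1"
      using order.trans by blast
    with covered_by_le_imp_eq[OF y1 y2] covered_by_le_imp_eq[OF y2 y1] \<open>y1 \<noteq> y2\<close>
    show False by auto
  qed
  have "y1 \<le> x" "y2 \<le> x"
    using y1 y2 unfolding covered_by_def by auto
  let ?S = "indicator_vector ` insert U (range up)"
  have "card ?S = card (insert U (range up))"
    by (rule card_image[OF inj_on_subset[OF inj_indicator_vector subset_UNIV]])
  also have "\<dots> = CARD('a) + 1"
    using \<open>U \<notin> range up\<close> card_image[OF \<open>inj up\<close>] by simp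
  finally have "card ?S = CARD('a) + 1" .
  moreover have "card ?S \<le> card B"
  proof (rule card_le_of_extreme_rays_conical_hull[OF B(1)], unfold B(3)[symmetric])
    fix v assume "v \<in> ?S"
    then consider "v = indicator_vector U" | z where "v = indicator_vector (up z)"
      by blast
    then show "extreme_ray order_cone v"
      by cases (simp_all add: U_def up_def extreme_ray_order_cone_principal_upset
          extreme_ray_order_cone_union_principal_upsets[OF \<open>y1 \<le> x\<close> \<open>y2 \<le> x\<close>])
  next
    fix v w s assume "v \<in> ?S" "w \<in> ?S" and v: "v = s *\<^sub>R w"
    then obtain V W where "V \<in> insert U (range up)" "v = indicator_vector V" "w = indicator_vector W"
      by blast
    moreover from this(1) have "V \<noteq> {}"
      by (auto simp: U_def up_def)
    ultimately show "v = w"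
      using indicator_vector_eq_scaleR_imp_eq v by blast
  qed
  ultimately show False
    using B(2) by simp
qed

theorem lemma5:
  "(simplicial (order_cone :: (real^('a::{finite,order})) set) \<longrightarrow>
     (\<forall>x y::'a::{finite,order}.
        matrix_inv (matrix mobius_transform :: real^('a::{finite,order})^('a::{finite,order})) $ x $ y =
        (if x = y then 1 else if covered_by y x then -1 else 0)))
   \<and>
   (\<forall>i j::'b::{finite,linorder}.
        matrix_inv (matrix mobius_transform :: real^('b::{finite,linorder})^('b::{finite,linorder})) $ i $ j =
        (if i = j then 1 else if covered_by j i then -1 else 0))"
proof (intro conjI impI)
  assume "simplicial (order_cone :: (real^('a::{finite,order})) set)"
  then show "\<forall>x y::'a. matrix_inv (matrix mobius_transform) $ x $ y =
      (if x = y then 1 else if covered_by y x then -1 else 0)"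
    by (simp add: matrix_inv_mobius_transform lower_cover_unique_if_simplicial_order_cone)
next
  show "\<forall>i j::'b. matrix_inv (matrix mobius_transform) $ i $ j =
      (if i = j then 1 else if covered_by j i then -1 else 0)"
    by (simp add: matrix_inv_mobius_transform covered_by_unique_linorder)
qed

end
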